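(* Let $p\ge1$ and $n>p$ be integers, and let $\Lambda\in\mathbb R$. Let $z\in C^{2n}[-1,1]$ be a real even function such that: - $L^{2n}(\Lambda)z=0$ on $[-1,1]$, and - $z^{(j)}(\pm1)=0$ for $j=0,\dots,n-1$. Then $c:=L^{2n-2}(\Lambda)z$ is a constant function on $[-1,1]$. If $c=0$, then $z\equiv0$.
   Context: For an integer $k\ge p$ and real $\Lambda$, the differential operator $L^{2k}(\Lambda)$ on $[-1,1]$ is $$L^{2k}(\Lambda)=(-1)^k\frac{d^{2k}}{dx^{2k}}-\Lambda(-1)^{k-p}\frac{d^{2k-2p}}{dx^{2k-2p}}.$$ The constant $c$ is called the "stone" of $z$. *)

theory Defs
  imports "HOL-Analysis.Analysis"
begin

text \<open>Derivatives of a C^{2n} function on [-1,1] are represented by a family D, with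
  D j the j-th derivative (one-sided at the endpoints).\<close>

definition Lop :: "nat \<Rightarrow> nat \<Rightarrow> real \<Rightarrow> (nat \<Rightarrow> real \<Rightarrow> real) \<Rightarrow> real \<Rightarrow> real" where
  "Lop p k \<Lambda> D x = (-1) ^ k * D (2 * k) x - \<Lambda> * (-1) ^ (k - p) * D (2 * k - 2 * p) x"

end

theory Submission
  imports Defs
begin

text \<open>Write \<open>m = n - 1\<close>. The derivative of \<open>L^(2m)(\<Lambda>) z\<close> is an odd function whose own derivative
  is \<open>-L^(2n)(\<Lambda>) z = 0\<close>, so it vanishes and \<open>L^(2m)(\<Lambda>) z\<close> is a constant \<open>c\<close>. If \<open>c = 0\<close>, test
  \<open>(-1)^m z^(2m) = \<Lambda> (-1)^(m-p) z^(2m-2p)\<close> against \<open>z\<close> and against \<open>x z'\<close> and integrate by parts;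
  all boundary terms vanish by the Dirichlet conditions. With \<open>A j = \<integral> (z^(j))^2\<close> this yields the
  energy relation \<open>A m = \<Lambda> A (m-p)\<close> and the Pohozaev relation
  \<open>(m - 1/2) A m = \<Lambda> (m-p-1/2) A (m-p)\<close>. Hence \<open>p \<Lambda> A (m-p) = 0\<close>, so \<open>A m = 0\<close>, i.e.
  \<open>z^(m) = 0\<close>, and the boundary values at \<open>1\<close> force \<open>z = 0\<close>.\<close>

definition has_derivs_upto :: "nat \<Rightarrow> (nat \<Rightarrow> real \<Rightarrow> real) \<Rightarrow> real set \<Rightarrow> bool" where
  "has_derivs_upto N D S \<longleftrightarrow>
     (\<forall>j<N. \<forall>x\<in>S. (D j has_real_derivative D (Suc j) x) (at x within S)) \<and> continuous_on S (D N)"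

lemma has_derivs_uptoD:
  "has_derivs_upto N D S \<Longrightarrow> j < N \<Longrightarrow> x \<in> S \<Longrightarrow> (D j has_real_derivative D (Suc j) x) (at x within S)"
  unfolding has_derivs_upto_def by blast

lemma has_derivs_upto_continuous_on:
  assumes "has_derivs_upto N D S" and "j \<le> N"
  shows "continuous_on S (D j)"
proof (cases "j = N")
  case True
  then show ?thesis using assms(1) by (simp add: has_derivs_upto_def)
next
  case False
  then show ?thesis
    using assms by (intro DERIV_continuous_on) (auto intro: has_derivs_uptoD)
qed

lemma has_derivs_upto_mono:
  "has_derivs_upto N D S \<Longrightarrow> k \<le> N \<Longrightarrow> has_derivs_upto k D S"
  by (auto simp: has_derivs_upto_def intro: has_derivs_uptoD has_derivs_upto_continuous_on)

lemma has_derivs_upto_shift: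
  "has_derivs_upto N D S \<Longrightarrow> k \<le> N \<Longrightarrow> has_derivs_upto (N - k) (\<lambda>j. D (k + j)) S"
  by (auto simp: has_derivs_upto_def intro: has_derivs_uptoD)

lemma has_derivs_upto_Suc_shift:
  "has_derivs_upto (Suc N) D S \<Longrightarrow> has_derivs_upto N (\<lambda>j. D (Suc j)) S"
  using has_derivs_upto_shift[of "Suc N" D S 1] by simp

lemma has_integral_derivative_eq_0:
  fixes f f' :: "real \<Rightarrow> real"
  assumes "a \<le> b" and "\<And>x. x \<in> {a..b} \<Longrightarrow> (f has_real_derivative f' x) (at x within {a..b})"
    and "f a = 0" and "f b = 0"
  shows "(f' has_integral 0) {a..b}"
  using fundamental_theorem_of_calculus[of a b f f'] assms
  by (simp add: has_real_derivative_iff_has_vector_derivative)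

lemma integral_by_parts_iterated:
  fixes F G :: "nat \<Rightarrow> real \<Rightarrow> real"
  assumes "a \<le> b" and "has_derivs_upto k F {a..b}" and "has_derivs_upto k G {a..b}"
    and "\<forall>i<k. F i a = 0 \<and> F i b = 0"
  shows "integral {a..b} (\<lambda>x. F 0 x * G k x) = (-1) ^ k * integral {a..b} (\<lambda>x. F k x * G 0 x)"
  using assms(2-4)
proof (induction k arbitrary: F)
  case 0
  then show ?case by simp
next
  case (Suc k)
  have IH: "integral {a..b} (\<lambda>x. F 1 x * G k x) = (-1) ^ k * integral {a..b} (\<lambda>x. F (Suc k) x * G 0 x)"
  proof -
    have "has_derivs_upto k (\<lambda>i. F (Suc i)) {a..b}" "has_derivs_upto k G {a..b}"
      using has_derivs_upto_Suc_shift[OF Suc.prems(1)] has_derivs_upto_mono[OF Suc.prems(2)] by auto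
    then show ?thesis using Suc.IH[of "\<lambda>i. F (Suc i)"] Suc.prems(3) by simp
  qed
  have sum: "((\<lambda>x. F 1 x * G k x + F 0 x * G (Suc k) x) has_integral 0) {a..b}"
  proof (rule has_integral_derivative_eq_0[OF \<open>a \<le> b\<close>])
    fix x assume "x \<in> {a..b}"
    then show "((\<lambda>x. F 0 x * G k x) has_real_derivative F 1 x * G k x + F 0 x * G (Suc k) x) (at x within {a..b})"
      using has_derivs_uptoD[OF Suc.prems(1), of 0 x] has_derivs_uptoD[OF Suc.prems(2), of k x]
      by (auto intro!: derivative_eq_intros)
  qed (use Suc.prems(3) in auto)
  have int: "(\<lambda>x. F 1 x * G k x) integrable_on {a..b}"
    using has_derivs_upto_continuous_on[OF Suc.prems(1), of 1] has_derivs_upto_continuous_on[OF Suc.prems(2), of k]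
    by (intro integrable_continuous_real continuous_intros) auto
  have "((\<lambda>x. F 0 x * G (Suc k) x) has_integral - integral {a..b} (\<lambda>x. F 1 x * G k x)) {a..b}"
    using has_integral_diff[OF sum integrable_integral[OF int]] by simp
  then have "integral {a..b} (\<lambda>x. F 0 x * G (Suc k) x) = - integral {a..b} (\<lambda>x. F 1 x * G k x)"
    by (rule integral_unique)
  then show ?case using IH by simp
qed

lemma energy_identity:
  assumes "a \<le> b" and D: "has_derivs_upto N D {a..b}" and "2 * k \<le> N"
    and "\<forall>j<k. D j a = 0 \<and> D j b = 0"
  shows "integral {a..b} (\<lambda>x. D 0 x * D (2 * k) x) = (-1) ^ k * integral {a..b} (\<lambda>x. (D k x)\<^sup>2)"
proof -
  have "has_derivs_upto k D {a..b}"
    using has_derivs_upto_mono[OF D] \<open>2 * k \<le> N\<close> by simp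
  moreover have "has_derivs_upto k (\<lambda>j. D (k + j)) {a..b}"
    using has_derivs_upto_mono[OF has_derivs_upto_shift[OF D, of k]] \<open>2 * k \<le> N\<close> by simp
  ultimately have "integral {a..b} (\<lambda>x. D 0 x * D (k + k) x) = (-1) ^ k * integral {a..b} (\<lambda>x. D k x * D (k + 0) x)"
    using integral_by_parts_iterated[of a b k D "\<lambda>j. D (k + j)"] assms(1,4) by simp
  then show ?thesis by (simp add: mult_2 power2_eq_square)
qed

lemma integral_x_mult_deriv_mult_eq:
  fixes f f' :: "real \<Rightarrow> real"
  assumes "a \<le> b" and f: "\<And>x. x \<in> {a..b} \<Longrightarrow> (f has_real_derivative f' x) (at x within {a..b})"
    and "continuous_on {a..b} f'" and "f a = 0" and "f b = 0"
  shows "integral {a..b} (\<lambda>x. x * f' x * f x) = - integral {a..b} (\<lambda>x. (f x)\<^sup>2) / 2"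
proof -
  have "continuous_on {a..b} f"
    using f by (rule DERIV_continuous_on)
  then have int: "(\<lambda>x. (f x)\<^sup>2) integrable_on {a..b}" "(\<lambda>x. x * f' x * f x) integrable_on {a..b}"
    using \<open>continuous_on {a..b} f'\<close> by (auto intro!: integrable_continuous_real continuous_intros)
  have "((\<lambda>x. (f x)\<^sup>2 + 2 * (x * f' x * f x)) has_integral 0) {a..b}"
  proof (rule has_integral_derivative_eq_0[OF \<open>a \<le> b\<close>])
    fix x assume "x \<in> {a..b}"
    from f[OF this] show "((\<lambda>x. x * (f x)\<^sup>2) has_real_derivative (f x)\<^sup>2 + 2 * (x * f' x * f x)) (at x within {a..b})"
      by (auto intro!: derivative_eq_intros simp: algebra_simps power2_eq_square)
  qed (use assms in simp_all)
  then have "integral {a..b} (\<lambda>x. (f x)\<^sup>2 + 2 * (x * f' x * f x)) = 0"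
    by (rule integral_unique)
  then have "integral {a..b} (\<lambda>x. (f x)\<^sup>2) + 2 * integral {a..b} (\<lambda>x. x * f' x * f x) = 0"
    using int by (simp add: integral_add)
  then show ?thesis by simp
qed

lemma pohozaev_identity:
  assumes "a \<le> b" and D: "has_derivs_upto N D {a..b}" and "2 * k \<le> N" and "k < N"
    and B: "\<forall>j\<le>k. D j a = 0 \<and> D j b = 0"
  shows "integral {a..b} (\<lambda>x. x * D 1 x * D (2 * k) x)
    = (-1) ^ k * (real k - 1/2) * integral {a..b} (\<lambda>x. (D k x)\<^sup>2)"
proof -
  \<comment> \<open>\<open>F i\<close> is the \<open>i\<close>-th derivative of \<open>x \<mapsto> x * D 1 x\<close>.\<close>
  define F where "F i x = x * D (Suc i) x + real i * D i x" for i x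
  have "has_derivs_upto k F {a..b}"
    unfolding has_derivs_upto_def
  proof (intro conjI allI impI ballI)
    fix i x assume "i < k" "x \<in> {a..b}"
    then have "(D i has_real_derivative D (Suc i) x) (at x within {a..b})"
      "(D (Suc i) has_real_derivative D (Suc (Suc i)) x) (at x within {a..b})"
      using has_derivs_uptoD[OF D] \<open>2 * k \<le> N\<close> by simp_all
    then show "(F i has_real_derivative F (Suc i) x) (at x within {a..b})"
      unfolding F_def by (auto intro!: derivative_eq_intros simp: algebra_simps)
  next
    show "continuous_on {a..b} (F k)"
      unfolding F_def using has_derivs_upto_continuous_on[OF D] \<open>k < N\<close> \<open>2 * k \<le> N\<close>
      by (auto intro!: continuous_intros)
  qed
  moreover have "has_derivs_upto k (\<lambda>j. D (k + j)) {a..b}"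
    using has_derivs_upto_mono[OF has_derivs_upto_shift[OF D, of k]] \<open>2 * k \<le> N\<close> by simp
  moreover have "\<forall>i<k. F i a = 0 \<and> F i b = 0"
    using B by (simp add: F_def)
  ultimately have "integral {a..b} (\<lambda>x. F 0 x * D (2 * k) x) = (-1) ^ k * integral {a..b} (\<lambda>x. F k x * D k x)"
    using integral_by_parts_iterated[of a b k F "\<lambda>j. D (k + j)"] \<open>a \<le> b\<close> by (simp add: mult_2)
  also have "integral {a..b} (\<lambda>x. F k x * D k x)
      = integral {a..b} (\<lambda>x. x * D (Suc k) x * D k x) + real k * integral {a..b} (\<lambda>x. (D k x)\<^sup>2)"
  proof -
    have "continuous_on {a..b} (D k)" "continuous_on {a..b} (D (Suc k))"
      using has_derivs_upto_continuous_on[OF D] \<open>k < N\<close> by simp_all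
    then have "(\<lambda>x. x * D (Suc k) x * D k x) integrable_on {a..b}" "(\<lambda>x. real k * (D k x)\<^sup>2) integrable_on {a..b}"
      by (auto intro!: integrable_continuous_real continuous_intros)
    then have "integral {a..b} (\<lambda>x. x * D (Suc k) x * D k x + real k * (D k x)\<^sup>2)
        = integral {a..b} (\<lambda>x. x * D (Suc k) x * D k x) + real k * integral {a..b} (\<lambda>x. (D k x)\<^sup>2)"
      by (simp add: integral_add)
    then show ?thesis
      by (simp add: F_def algebra_simps power2_eq_square)
  qed
  also have "integral {a..b} (\<lambda>x. x * D (Suc k) x * D k x) = - integral {a..b} (\<lambda>x. (D k x)\<^sup>2) / 2"
    using has_derivs_uptoD[OF D] has_derivs_upto_continuous_on[OF D] \<open>k < N\<close> B \<open>a \<le> b\<close>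
    by (intro integral_x_mult_deriv_mult_eq) auto
  finally show ?thesis by (simp add: F_def algebra_simps)
qed

lemma integral_square_eq_0_imp_eq_0:
  fixes f :: "real \<Rightarrow> real"
  assumes "a < b" and "continuous_on {a..b} f" and "integral {a..b} (\<lambda>x. (f x)\<^sup>2) = 0"
    and "x \<in> {a..b}"
  shows "f x = 0"
proof -
  have cont: "continuous_on {a..b} (\<lambda>x. (f x)\<^sup>2)"
    using assms(2) by (auto intro!: continuous_intros)
  then have "((\<lambda>x. (f x)\<^sup>2) has_integral 0) {a..b}"
    using assms(3) integrable_integral[OF integrable_continuous_real[OF cont]] by simp
  then have "(f x)\<^sup>2 = 0"
    using has_integral_0_cbox_imp_0[of a b "\<lambda>x. (f x)\<^sup>2" x] cont assms(1,4) by simp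
  then show ?thesis by simp
qed

lemma derivs_eq_0_if_top_eq_0:
  assumes "convex S" and "x\<^sub>0 \<in> S" and "has_derivs_upto k D S"
    and "\<forall>x\<in>S. D k x = 0" and "\<forall>j<k. D j x\<^sub>0 = 0"
  shows "\<forall>x\<in>S. D 0 x = 0"
  using assms(3-5)
proof (induction k)
  case 0
  then show ?case by simp
next
  case (Suc k)
  have "\<And>x. x \<in> S \<Longrightarrow> (D k has_real_derivative 0) (at x within S)"
    using has_derivs_uptoD[OF Suc.prems(1)] Suc.prems(2) by fastforce
  then obtain c where "\<forall>x\<in>S. D k x = c"
    using has_field_derivative_zero_constant[OF \<open>convex S\<close>] by blast
  with \<open>x\<^sub>0 \<in> S\<close> Suc.prems(3) have "\<forall>x\<in>S. D k x = 0"
    by auto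
  then show ?case
    using Suc.IH has_derivs_upto_mono[OF Suc.prems(1)] Suc.prems(3) by simp
qed

lemma derivs_parity_of_even:
  assumes "0 < r" and D: "has_derivs_upto N D {-r..r}" and even: "\<forall>x\<in>{-r..r}. D 0 (- x) = D 0 x"
    and "j \<le> N" and "x \<in> {-r..r}"
  shows "D j (- x) = (-1) ^ j * D j x"
  using assms(4,5)
proof (induction j arbitrary: x)
  case 0
  then show ?case using even by simp
next
  case (Suc j)
  have "uminus ` {-r..r} = {-r..r}"
    by (auto intro: image_eqI[where x="- _"])
  then have "(D j has_real_derivative D (Suc j) (- x)) (at (- x) within uminus ` {-r..r})"
    using has_derivs_uptoD[OF D] Suc.prems by simp
  from DERIV_image_chain[OF this DERIV_minus[OF DERIV_ident]]
  have "((\<lambda>y. D j (- y)) has_real_derivative - D (Suc j) (- x)) (at x within {-r..r})"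
    by (simp add: o_def)
  moreover have "((\<lambda>y. D j (- y)) has_real_derivative (-1) ^ j * D (Suc j) x) (at x within {-r..r})"
  proof (rule has_field_derivative_transform_within[OF _ zero_less_one \<open>x \<in> {-r..r}\<close>])
    show "((\<lambda>y. (-1) ^ j * D j y) has_real_derivative (-1) ^ j * D (Suc j) x) (at x within {-r..r})"
      using has_derivs_uptoD[OF D] Suc.prems by (auto intro!: derivative_eq_intros)
  qed (use Suc.IH Suc.prems in simp)
  ultimately have "- D (Suc j) (- x) = (-1) ^ j * D (Suc j) x"
    using vector_derivative_unique_within_closed_interval[of "-r" r x] \<open>0 < r\<close> Suc.prems(2)
    by (simp add: has_real_derivative_iff_has_vector_derivative)
  then show ?case by simp
qed

lemma odd_deriv_of_even_eq_0:
  assumes "0 < r" and "has_derivs_upto N D {-r..r}" and "\<forall>x\<in>{-r..r}. D 0 (- x) = D 0 x"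
    and "j \<le> N" and "odd j"
  shows "D j 0 = 0"
  using derivs_parity_of_even[OF assms(1-4), of 0] assms(1,5) by simp

lemma Lop_Suc:
  "p \<le> k \<Longrightarrow> Lop p (Suc k) \<Lambda> D x = - Lop p k \<Lambda> (\<lambda>j. D (Suc (Suc j))) x"
  by (simp add: Lop_def Suc_diff_le numeral_2_eq_2)

lemma Lop_has_real_derivative:
  assumes "has_derivs_upto N D S" and "2 * k < N" and "x \<in> S"
  shows "(Lop p k \<Lambda> D has_real_derivative Lop p k \<Lambda> (\<lambda>j. D (Suc j)) x) (at x within S)"
  using has_derivs_uptoD[OF assms(1) _ assms(3), of "2 * k"] has_derivs_uptoD[OF assms(1) _ assms(3), of "2 * k - 2 * p"] assms(2)
  unfolding Lop_def[abs_def] by (auto intro!: derivative_eq_intros)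

lemma Lop_constant_if_Lop_Suc_eq_0:
  assumes "0 < r" and "p \<le> m" and D: "has_derivs_upto (2 * Suc m) D {-r..r}"
    and even: "\<forall>x\<in>{-r..r}. D 0 (- x) = D 0 x"
    and L: "\<forall>x\<in>{-r..r}. Lop p (Suc m) \<Lambda> D x = 0"
  shows "\<exists>c. \<forall>x\<in>{-r..r}. Lop p m \<Lambda> D x = c"
proof -
  let ?E = "Lop p m \<Lambda> (\<lambda>j. D (Suc j))"
  have "(?E has_real_derivative 0) (at x within {-r..r})" if "x \<in> {-r..r}" for x
  proof -
    have "has_derivs_upto (Suc (2 * m)) (\<lambda>j. D (Suc j)) {-r..r}"
      using has_derivs_upto_Suc_shift D by simp
    from Lop_has_real_derivative[OF this _ that, of m p \<Lambda>]
    show ?thesis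
      using L Lop_Suc[OF \<open>p \<le> m\<close>, of \<Lambda> D x] that by simp
  qed
  then obtain e where e: "\<forall>x\<in>{-r..r}. ?E x = e"
    using has_field_derivative_zero_constant[of "{-r..r}" ?E] by auto
  have "?E 0 = 0"
    using odd_deriv_of_even_eq_0[OF \<open>0 < r\<close> D even] by (simp add: Lop_def)
  with e \<open>0 < r\<close> have "\<forall>x\<in>{-r..r}. ?E x = 0"
    by auto
  then have "(Lop p m \<Lambda> D has_real_derivative 0) (at x within {-r..r})" if "x \<in> {-r..r}" for x
    using Lop_has_real_derivative[OF D _ that, of m p \<Lambda>] that by simp
  then show ?thesis
    using has_field_derivative_zero_constant[of "{-r..r}" "Lop p m \<Lambda> D"] by auto
qed

lemma Lop_eq_0_Dirichlet_imp_eq_0: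
  assumes "a < b" and "1 \<le> p" and "p \<le> k" and D: "has_derivs_upto (2 * k) D {a..b}"
    and L: "\<forall>x\<in>{a..b}. Lop p k \<Lambda> D x = 0"
    and B: "\<forall>j\<le>k. D j a = 0 \<and> D j b = 0"
  shows "\<forall>x\<in>{a..b}. D 0 x = 0"
proof -
  define A where "A j = integral {a..b} (\<lambda>x. (D j x)\<^sup>2)" for j
  have ab: "a \<le> b" using \<open>a < b\<close> by simp
  have L': "(-1) ^ k * integral {a..b} (\<lambda>x. w x * D (2 * k) x)
      = \<Lambda> * (-1) ^ (k - p) * integral {a..b} (\<lambda>x. w x * D (2 * (k - p)) x)" for w
  proof -
    have "(-1) ^ k * D (2 * k) x = \<Lambda> * (-1) ^ (k - p) * D (2 * (k - p)) x" if "x \<in> {a..b}" for x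
      using L that by (simp add: Lop_def diff_mult_distrib2)
    then have "integral {a..b} (\<lambda>x. (-1) ^ k * (w x * D (2 * k) x))
        = integral {a..b} (\<lambda>x. \<Lambda> * (-1) ^ (k - p) * (w x * D (2 * (k - p)) x))"
      by (intro integral_cong) (metis mult.left_commute)
    then show ?thesis by simp
  qed
  have energy: "integral {a..b} (\<lambda>x. D 0 x * D (2 * j) x) = (-1) ^ j * A j" if "j \<le> k" for j
    unfolding A_def using energy_identity[OF ab D] B that by simp
  have pohozaev: "integral {a..b} (\<lambda>x. x * D 1 x * D (2 * j) x) = (-1) ^ j * (real j - 1/2) * A j"
    if "j \<le> k" for j
    unfolding A_def using pohozaev_identity[OF ab D] B that \<open>1 \<le> p\<close> \<open>p \<le> k\<close> by simp
  have sign: "(-1::real) ^ j * (-1) ^ j = 1" for j :: nat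
    by (simp add: power_add[symmetric])
  have "A k = \<Lambda> * A (k - p)"
    using L'[of "D 0"] energy[of k] energy[of "k - p"] sign
    by (simp add: mult.assoc[symmetric])
  moreover have "(real k - 1/2) * A k = \<Lambda> * ((real (k - p) - 1/2) * A (k - p))"
    using L'[of "\<lambda>x. x * D 1 x"] pohozaev[of k] pohozaev[of "k - p"] sign
    by (simp add: mult.assoc[symmetric])
  ultimately have "real p * (\<Lambda> * A (k - p)) = 0"
    using \<open>p \<le> k\<close> by (simp add: of_nat_diff algebra_simps)
  then have "A k = 0"
    using \<open>A k = \<Lambda> * A (k - p)\<close> \<open>1 \<le> p\<close> by simp
  then have "\<forall>x\<in>{a..b}. D k x = 0"
    using integral_square_eq_0_imp_eq_0[OF \<open>a < b\<close> has_derivs_upto_continuous_on[OF D]]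
    by (simp add: A_def)
  then show ?thesis
    using derivs_eq_0_if_top_eq_0[of "{a..b}" b k D] has_derivs_upto_mono[OF D] B ab by simp
qed

theorem mainTheorem3:
  fixes p n :: nat and \<Lambda> :: real and z :: "real \<Rightarrow> real" and D :: "nat \<Rightarrow> real \<Rightarrow> real"
  assumes "p \<ge> 1" and "n > p"
    and "D 0 = z"
    and "\<forall>j < 2 * n. \<forall>x \<in> {-1..1}. (D j has_real_derivative D (Suc j) x) (at x within {-1..1})"
    and "continuous_on {-1..1} (D (2 * n))"
    and "\<forall>x \<in> {-1..1}. z (- x) = z x"
    and "\<forall>x \<in> {-1..1}. Lop p n \<Lambda> D x = 0"
    and "\<forall>j < n. D j (-1) = 0 \<and> D j 1 = 0"
  shows "\<exists>c. (\<forall>x \<in> {-1..1}. Lop p (n - 1) \<Lambda> D x = c) \<and> (c = 0 \<longrightarrow> (\<forall>x \<in> {-1..1}. z x = 0))"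
proof -
  obtain m where n: "n = Suc m"
    using \<open>n > p\<close> by (cases n) auto
  have D: "has_derivs_upto (2 * Suc m) D {-1..1}"
    using assms(4,5) n by (simp add: has_derivs_upto_def)
  have "\<exists>c. \<forall>x\<in>{-1..1}. Lop p m \<Lambda> D x = c"
    by (rule Lop_constant_if_Lop_Suc_eq_0[OF zero_less_one _ D]) (use assms(2,3,6,7) n in auto)
  then obtain c where c: "\<forall>x\<in>{-1..1}. Lop p m \<Lambda> D x = c" ..
  show ?thesis
  proof (intro exI conjI impI)
    show "\<forall>x\<in>{-1..1}. Lop p (n - 1) \<Lambda> D x = c"
      using c n by simp
  next
    assume "c = 0"
    have "has_derivs_upto (2 * m) D {-1..1}"
      using has_derivs_upto_mono[OF D] by simp
    then show "\<forall>x\<in>{-1..1}. z x = 0"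
      using Lop_eq_0_Dirichlet_imp_eq_0[of "-1" 1 p m D \<Lambda>] c \<open>c = 0\<close> assms(1-3,8) n by auto
  qed
qed

end
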